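(* Let $A$ be an infinite alphabet and let $\tilde f:A^2\to\{0,1\}$ satisfy: (i) for each $x\in A$ there is $y\in A$ with $\tilde f(x,y)=1$; (ii) the set $\{x\in A: \tilde f(x,y)=1$ for infinitely many $y\in A\}$ is finite and non-empty. Let $f$ be the $1$-step shift map induced by $\tilde f$. Then the $1$-step shift space $X_f$ contains only finitely many elements of length $1$ (namely those $x\in A$ with $\tilde f(x,y)=1$ for infinitely many $y$), and $X_f$ is not conjugate to any $0$-step shift space (i.e. to any full shift $\Sigma_B$). In particular this applies to $\tilde f$ defined, for a fixed $x_0\in A$, by $\tilde f(x,y)=1$ if $x=x_0$, $\tilde f(x,y)=1$ if $x\ne x_0$ and $y=x$, and $\tilde f(x,y)=0$ otherwise.
   Context: For an alphabet $A$, $\Sigma_A$ is the set of infinite sequences over $A$ together with, when $A$ is infinite, all finite sequences (including the empty sequence $\emptyset$); for finite $A$ it is just the infinite sequences. The topology is generated by the generalized cylinders $Z(x,F)=\{y: y_i=x_i\ (1\le i\le k),\ y_{k+1}\notin F\}$ ($x=(x_1,\dots,x_k)\ne\emptyset$, $F\subseteq A$ finite) and $Z(\emptyset,F)=\{y: y_1\notin F\}$; $l(x)$ denotes length ($\infty$ for infinite sequences); $\sigma$ deletes the first letter. A subblock of $x$ is a finite word $u$ with $x=vuz$. For $f:\bigcup_{k\ge1}A^k\to\{0,1\}$: $X_f^{inf}=\{x\in A^{\mathbb N}: f(u)=1$ for all nonempty subblocks $u$ of $x\}$, $X_f^{fin}=\{x$ finite: there are infinitely many $a\in A$ with $xay\in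 X_f^{inf}$ for some infinite $y\}$, $X_f=X_f^{inf}\cup X_f^{fin}$. For $N\ge0$ and $\tilde f:A^{N+1}\to\{0,1\}$ the $N$-step shift map induced by $\tilde f$ is $f(x)=1$ if $|x|\le N$ and $f(x)=\prod_{i=1}^{|x|-N}\tilde f(x_i,\dots,x_{N+i})$ if $|x|\ge N+1$; $N$-step shift spaces are the sets $X_g$ for such induced maps $g$ (over some alphabet $B$). A conjugacy is a continuous, shift-commuting bijection between shift spaces preserving length $l$. *)

theory Defs
  imports "HOL-Analysis.Analysis" "HOL-Library.Extended_Nat"
begin

text \<open>Sequences: finite words (lists) or infinite sequences (functions on nat, index 0 = first letter).\<close>
datatype 'a seq = Fin "'a list" | Inf "nat \<Rightarrow> 'a"

definition Sigma_seq :: "'a set \<Rightarrow> 'a seq set" where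
  "Sigma_seq A = {Inf w | w. range w \<subseteq> A}
     \<union> (if infinite A then {Fin xs | xs. set xs \<subseteq> A} else {})"

fun len :: "'a seq \<Rightarrow> enat" where
  "len (Fin xs) = enat (length xs)"
| "len (Inf w) = \<infinity>"

text \<open>The shift sigma (deletes the first letter; the empty sequence is mapped to itself).\<close>
fun shift :: "'a seq \<Rightarrow> 'a seq" where
  "shift (Fin xs) = Fin (tl xs)"
| "shift (Inf w) = Inf (\<lambda>n. w (Suc n))"

fun letter :: "'a seq \<Rightarrow> nat \<Rightarrow> 'a" where
  "letter (Fin xs) i = xs ! i"
| "letter (Inf w) i = w i"

definition has_prefix :: "'a seq \<Rightarrow> 'a list \<Rightarrow> bool" where
  "has_prefix y x \<longleftrightarrow> enat (length x) \<le> len y \<and> (\<forall>i<length x. letter y i = x ! i)"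

definition cyl :: "'a set \<Rightarrow> 'a list \<Rightarrow> 'a set \<Rightarrow> 'a seq set" where
  "cyl A x F = {y \<in> Sigma_seq A. has_prefix y x \<and>
       (enat (length x) < len y \<longrightarrow> letter y (length x) \<notin> F)}"

definition seq_top :: "'a set \<Rightarrow> 'a seq topology" where
  "seq_top A = topology_generated_by {cyl A x F | x F. set x \<subseteq> A \<and> finite F \<and> F \<subseteq> A}"

definition conc :: "'a list \<Rightarrow> (nat \<Rightarrow> 'a) \<Rightarrow> (nat \<Rightarrow> 'a)" where
  "conc xs w = (\<lambda>n. if n < length xs then xs ! n else w (n - length xs))"

text \<open>Shift spaces X_f for f : words \<rightarrow> {0,1}. The nonempty subblocks of an
  infinite sequence w are exactly the words map w [i..<i+n] with n \<ge> 1.\<close>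
definition Xinf :: "'a set \<Rightarrow> ('a list \<Rightarrow> nat) \<Rightarrow> 'a seq set" where
  "Xinf A f = {Inf w | w. range w \<subseteq> A \<and> (\<forall>i n. 1 \<le> n \<longrightarrow> f (map w [i..<i+n]) = 1)}"

definition Xfin :: "'a set \<Rightarrow> ('a list \<Rightarrow> nat) \<Rightarrow> 'a seq set" where
  "Xfin A f = {Fin xs | xs. set xs \<subseteq> A \<and>
      infinite {a \<in> A. \<exists>y. range y \<subseteq> A \<and> Inf (conc (xs @ [a]) y) \<in> Xinf A f}}"

definition Xf :: "'a set \<Rightarrow> ('a list \<Rightarrow> nat) \<Rightarrow> 'a seq set" where
  "Xf A f = Xinf A f \<union> Xfin A f"

text \<open>N-step shift map induced by ft : A^(N+1) \<rightarrow> {0,1} (ft given on words of length N+1).\<close>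
definition induced :: "nat \<Rightarrow> ('a list \<Rightarrow> nat) \<Rightarrow> 'a list \<Rightarrow> nat" where
  "induced N ft x = (if length x \<le> N then 1
      else (\<Prod>i<length x - N. ft (take (N+1) (drop i x))))"

definition induced1 :: "('a \<Rightarrow> 'a \<Rightarrow> nat) \<Rightarrow> 'a list \<Rightarrow> nat" where
  "induced1 ft = induced 1 (\<lambda>u. ft (u ! 0) (u ! 1))"

definition induced0 :: "('b \<Rightarrow> nat) \<Rightarrow> 'b list \<Rightarrow> nat" where
  "induced0 gt = induced 0 (\<lambda>u. gt (u ! 0))"

definition is_conjugacy ::
  "'a set \<Rightarrow> 'a seq set \<Rightarrow> 'b set \<Rightarrow> 'b seq set \<Rightarrow> ('a seq \<Rightarrow> 'b seq) \<Rightarrow> bool" where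
  "is_conjugacy A X B Y \<phi> \<longleftrightarrow>
     bij_betw \<phi> X Y \<and>
     continuous_map (subtopology (seq_top A) X) (subtopology (seq_top B) Y) \<phi> \<and>
     (\<forall>x\<in>X. \<phi> (shift x) = shift (\<phi> x)) \<and>
     (\<forall>x\<in>X. len (\<phi> x) = len x)"

definition thm_hyps :: "'a set \<Rightarrow> ('a \<Rightarrow> 'a \<Rightarrow> nat) \<Rightarrow> bool" where
  "thm_hyps A ft \<longleftrightarrow>
     (\<forall>x\<in>A. \<forall>y\<in>A. ft x y \<in> {0,1}) \<and>
     (\<forall>x\<in>A. \<exists>y\<in>A. ft x y = 1) \<and>
     finite {x \<in> A. infinite {y \<in> A. ft x y = 1}} \<and>
     {x \<in> A. infinite {y \<in> A. ft x y = 1}} \<noteq> {}"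

definition example_ft :: "'a \<Rightarrow> 'a \<Rightarrow> 'a \<Rightarrow> nat" where
  "example_ft x0 x y = (if x = x0 then 1 else if y = x then 1 else 0)"

end

theory Submission
  imports Defs
begin

(* A 1-step shift space X_f as in the theorem has only finitely many points of length one,
   whereas every 0-step shift space X_g (a full shift) has either none or infinitely many.
   Since a conjugacy preserves length, it maps the points of length one of one space onto
   those of the other, so the two spaces cannot be conjugate.

   Using that every letter has a successor, a one-letter word a is a point of the
   1-step space iff infinitely many transitions leave a, which identifies the length-one
   points with the finite non-empty set of such letters.  For a 0-step space the
   continuations of a one-letter word do not depend on the word, which gives the
   none-or-infinitely-many dichotomy. *)

lemma all_conc_iff: "(\<forall>n. P (conc xs y n)) \<longleftrightarrow> (\<forall>x\<in>set xs. P x) \<and> (\<forall>n. P (y n))"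
proof
  assume H: "\<forall>n. P (conc xs y n)"
  have "P (xs ! i)" if "i < length xs" for i using H[rule_format, of i] that by (simp add: conc_def)
  moreover have "P (y n)" for n using H[rule_format, of "n + length xs"] by (simp add: conc_def)
  ultimately show "(\<forall>x\<in>set xs. P x) \<and> (\<forall>n. P (y n))" by (auto simp: in_set_conv_nth)
qed (auto simp: conc_def)

lemma range_conc_subset: "range (conc xs y) \<subseteq> S \<longleftrightarrow> set xs \<subseteq> S \<and> range y \<subseteq> S"
  using all_conc_iff[of "\<lambda>x. x \<in> S" xs y] by auto

lemma len_eq_1_iff: "len x = 1 \<longleftrightarrow> (\<exists>a. x = Fin [a])"
  by (cases x) (auto simp: one_enat_def length_Suc_conv)

lemma induced1_eq_prod:
  "induced1 ft xs = (\<Prod>j < length xs - 1. ft (xs ! j) (xs ! Suc j))"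
  by (simp add: induced1_def induced_def)

lemma induced0_eq_prod:
  "induced0 gt xs = (\<Prod>j < length xs. gt (xs ! j))"
  by (simp add: induced0_def induced_def)

text \<open>The infinite points of a 1-step shift space are the infinite paths in the
  transition graph \<open>ft\<close>: it suffices to check the blocks of length two.\<close>
lemma Xinf_induced1_iff:
  "Inf w \<in> Xinf A (induced1 ft) \<longleftrightarrow> range w \<subseteq> A \<and> (\<forall>m. ft (w m) (w (Suc m)) = 1)"
proof -
  have block: "induced1 ft (map w [i..<i+n]) = 1 \<longleftrightarrow> (\<forall>j < n - 1. ft (w (i+j)) (w (Suc (i+j))) = 1)"
    for i n
    unfolding induced1_eq_prod by (subst prod_eq_1_iff) auto
  have "(\<forall>i n. 1 \<le> n \<longrightarrow> induced1 ft (map w [i..<i+n]) = 1) \<longleftrightarrow> (\<forall>m. ft (w m) (w (Suc m)) = 1)"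
  proof
    assume "\<forall>i n. 1 \<le> n \<longrightarrow> induced1 ft (map w [i..<i+n]) = 1"
    then have "induced1 ft (map w [m..<m+2]) = 1" for m by (metis one_le_numeral)
    then show "\<forall>m. ft (w m) (w (Suc m)) = 1"
      unfolding block by simp
  qed (simp add: block del: One_nat_def)
  then show ?thesis unfolding Xinf_def by auto
qed

text \<open>The infinite points of a 0-step shift space are the infinite sequences of
  allowed letters: it suffices to check the blocks of length one.\<close>
lemma Xinf_induced0_iff:
  "Inf w \<in> Xinf B (induced0 gt) \<longleftrightarrow> range w \<subseteq> B \<and> (\<forall>m. gt (w m) = 1)"
proof -
  have block: "induced0 gt (map w [i..<i+n]) = 1 \<longleftrightarrow> (\<forall>j < n. gt (w (i+j)) = 1)" for i n
    unfolding induced0_eq_prod by (subst prod_eq_1_iff) auto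
  have "(\<forall>i n. 1 \<le> n \<longrightarrow> induced0 gt (map w [i..<i+n]) = 1) \<longleftrightarrow> (\<forall>m. gt (w m) = 1)"
  proof
    assume "\<forall>i n. 1 \<le> n \<longrightarrow> induced0 gt (map w [i..<i+n]) = 1"
    then have "induced0 gt (map w [m..<m+1]) = 1" for m by blast
    then show "\<forall>m. gt (w m) = 1"
      unfolding block by simp
  qed (simp add: block del: One_nat_def)
  then show ?thesis unfolding Xinf_def by auto
qed

text \<open>If every letter has a successor, every letter starts an infinite path
  (iterate a choice of successors).\<close>
lemma infinite_path_from:
  assumes succ: "\<forall>x\<in>A. \<exists>y\<in>A. ft x y = 1" and b: "b \<in> A"
  shows "\<exists>p. p 0 = b \<and> range p \<subseteq> A \<and> (\<forall>n. ft (p n) (p (Suc n)) = 1)"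
proof -
  obtain s where s: "\<forall>x\<in>A. s x \<in> A \<and> ft x (s x) = 1"
    using succ by metis
  define p where "p n = (s ^^ n) b" for n
  have pA: "p n \<in> A" for n
    by (induction n) (use b s in \<open>auto simp: p_def\<close>)
  have "ft (p n) (p (Suc n)) = 1" for n
    using s pA[of n] by (simp add: p_def)
  moreover have "p 0 = b" by (simp add: p_def)
  ultimately show ?thesis using pA by blast
qed

lemma pair_extends_iff:
  assumes succ: "\<forall>x\<in>A. \<exists>y\<in>A. ft x y = 1" and a: "a \<in> A" and b: "b \<in> A"
  shows "(\<exists>y. range y \<subseteq> A \<and> Inf (conc [a, b] y) \<in> Xinf A (induced1 ft)) \<longleftrightarrow> ft a b = 1"
proof
  assume "\<exists>y. range y \<subseteq> A \<and> Inf (conc [a, b] y) \<in> Xinf A (induced1 ft)"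
  then obtain y where "Inf (conc [a, b] y) \<in> Xinf A (induced1 ft)" by blast
  then have "ft (conc [a, b] y 0) (conc [a, b] y (Suc 0)) = 1"
    unfolding Xinf_induced1_iff by blast
  then show "ft a b = 1" by (simp add: conc_def)
next
  assume ab: "ft a b = 1"
  obtain p where p0: "p 0 = b" and pA: "range p \<subseteq> A" and path: "\<forall>n. ft (p n) (p (Suc n)) = 1"
    using infinite_path_from[OF succ b] by blast
  define w where "w n = (if n = 0 then a else p (n - 1))" for n
  have w_conc: "conc [a, b] (\<lambda>n. p (Suc n)) = w"
    using p0 by (auto simp: w_def conc_def nth_Cons split: nat.split)
  have "ft (w n) (w (Suc n)) = 1" for n
    using ab p0 path by (cases n) (auto simp: w_def)
  moreover have "range w \<subseteq> A"
    using a pA by (auto simp: w_def)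
  ultimately have "Inf (conc [a, b] (\<lambda>n. p (Suc n))) \<in> Xinf A (induced1 ft)"
    unfolding w_conc Xinf_induced1_iff by blast
  moreover have "range (\<lambda>n. p (Suc n)) \<subseteq> A"
    using pA by auto
  ultimately show "\<exists>y. range y \<subseteq> A \<and> Inf (conc [a, b] y) \<in> Xinf A (induced1 ft)"
    by (intro exI[of _ "\<lambda>n. p (Suc n)"]) simp
qed

lemma Fin_singleton_in_Xf_induced1_iff:
  assumes succ: "\<forall>x\<in>A. \<exists>y\<in>A. ft x y = 1"
  shows "Fin [a] \<in> Xf A (induced1 ft) \<longleftrightarrow> a \<in> A \<and> infinite {b \<in> A. ft a b = 1}"
proof (cases "a \<in> A")
  case True
  then have "{b \<in> A. \<exists>y. range y \<subseteq> A \<and> Inf (conc ([a] @ [b]) y) \<in> Xinf A (induced1 ft)}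
      = {b \<in> A. ft a b = 1}"
    using pair_extends_iff[OF succ] by auto
  then show ?thesis
    using True by (auto simp: Xf_def Xinf_def Xfin_def)
qed (auto simp: Xf_def Xinf_def Xfin_def)

lemma Xf_induced1_length_one:
  assumes succ: "\<forall>x\<in>A. \<exists>y\<in>A. ft x y = 1"
  shows "{x \<in> Xf A (induced1 ft). len x = 1} = {Fin [a] | a. a \<in> A \<and> infinite {y \<in> A. ft a y = 1}}"
  using Fin_singleton_in_Xf_induced1_iff[OF succ] by (auto simp: len_eq_1_iff)

text \<open>In a 0-step space the possible continuations of a one-letter word \<open>b\<close> are
  either none or all allowed letters, so \<open>b\<close> is a point iff \<open>b\<close> is allowed and there are
  infinitely many allowed letters.\<close>
lemma Fin_singleton_in_Xf_induced0_iff: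
  "Fin [b] \<in> Xf B (induced0 gt) \<longleftrightarrow> b \<in> B \<and> gt b = 1 \<and> infinite {a \<in> B. gt a = 1}"
proof -
  let ?G = "{a \<in> B. gt a = 1}"
  have ext: "(\<exists>y. range y \<subseteq> B \<and> Inf (conc ([b] @ [a]) y) \<in> Xinf B (induced0 gt))
      \<longleftrightarrow> b \<in> ?G \<and> a \<in> ?G" for a
  proof
    assume "b \<in> ?G \<and> a \<in> ?G"
    then have "range (conc [b, a] (\<lambda>_. a)) \<subseteq> B \<and> (\<forall>n. gt (conc [b, a] (\<lambda>_. a) n) = 1)"
      using all_conc_iff[of "\<lambda>x. gt x = 1" "[b, a]" "\<lambda>_. a"] by (auto simp: range_conc_subset)
    then show "\<exists>y. range y \<subseteq> B \<and> Inf (conc ([b] @ [a]) y) \<in> Xinf B (induced0 gt)"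
      unfolding Xinf_induced0_iff range_conc_subset by auto
  next
    assume "\<exists>y. range y \<subseteq> B \<and> Inf (conc ([b] @ [a]) y) \<in> Xinf B (induced0 gt)"
    then obtain y where "range (conc [b, a] y) \<subseteq> B" "\<forall>n. gt (conc [b, a] y n) = 1"
      unfolding Xinf_induced0_iff by auto
    then show "b \<in> ?G \<and> a \<in> ?G"
      unfolding range_conc_subset all_conc_iff[of "\<lambda>x. gt x = 1"] by simp
  qed
  then have "{a \<in> B. \<exists>y. range y \<subseteq> B \<and> Inf (conc ([b] @ [a]) y) \<in> Xinf B (induced0 gt)}
      = (if b \<in> ?G then ?G else {})"
    by auto
  then show ?thesis
    by (auto simp: Xf_def Xinf_def Xfin_def)
qed

lemma Xf_induced0_length_one_finite_imp_empty:
  assumes "finite {x \<in> Xf B (induced0 gt). len x = 1}"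
  shows "{x \<in> Xf B (induced0 gt). len x = 1} = {}"
proof -
  let ?G = "{a \<in> B. gt a = 1}"
  have "finite ?G"
  proof (rule ccontr)
    assume "infinite ?G"
    then have "(\<lambda>a. Fin [a]) ` ?G \<subseteq> {x \<in> Xf B (induced0 gt). len x = 1}"
      by (auto simp: Fin_singleton_in_Xf_induced0_iff len_eq_1_iff)
    then have "finite ((\<lambda>a. Fin [a]) ` ?G)"
      using assms finite_subset by blast
    moreover have "inj_on (\<lambda>a. Fin [a]) ?G" by (simp add: inj_on_def)
    ultimately show False
      using \<open>infinite ?G\<close> finite_imageD by blast
  qed
  then show ?thesis
    by (auto simp: len_eq_1_iff Fin_singleton_in_Xf_induced0_iff)
qed

lemma conjugacy_image_length:
  assumes "is_conjugacy A X B Y \<phi>"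
  shows "\<phi> ` {x \<in> X. len x = n} = {y \<in> Y. len y = n}"
proof -
  have bij: "bij_betw \<phi> X Y" and len: "\<forall>x\<in>X. len (\<phi> x) = len x"
    using assms unfolding is_conjugacy_def by auto
  show ?thesis
    using bij_betw_imp_surj_on[OF bij] len by auto
qed

text \<open>The example map satisfies the hypotheses: only \<open>x0\<close> has infinitely many
  successors, and every other letter is its own successor.\<close>
lemma example_ft_thm_hyps:
  assumes "infinite A" and "x0 \<in> A"
  shows "thm_hyps A (example_ft x0)"
proof -
  have "{y \<in> A. example_ft x0 x y = 1} = (if x = x0 then A else {x} \<inter> A)" for x
    by (auto simp: example_ft_def)
  then have "{x \<in> A. infinite {y \<in> A. example_ft x0 x y = 1}} = {x0}"
    using assms by auto
  then show ?thesis
    unfolding thm_hyps_def using assms(2) by (auto simp: example_ft_def)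
qed

theorem mainTheorem4:
  fixes A :: "'a set"
  assumes "infinite A"
  shows "(\<forall>ft. thm_hyps A ft \<longrightarrow>
            finite {x \<in> Xf A (induced1 ft). len x = 1} \<and>
            {x \<in> Xf A (induced1 ft). len x = 1}
              = {Fin [a] | a. a \<in> A \<and> infinite {y \<in> A. ft a y = 1}} \<and>
            (\<forall>(B :: 'b set) gt \<phi>. (\<forall>b\<in>B. gt b \<in> {0,1}) \<longrightarrow>
               \<not> is_conjugacy A (Xf A (induced1 ft)) B (Xf B (induced0 gt)) \<phi>))
       \<and> (\<forall>x0\<in>A. thm_hyps A (example_ft x0))"
proof (intro conjI allI impI ballI)
  fix ft assume H: "thm_hyps A ft"
  let ?S = "{x \<in> Xf A (induced1 ft). len x = 1}"
  let ?I = "{a \<in> A. infinite {y \<in> A. ft a y = 1}}"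
  have succ: "\<forall>x\<in>A. \<exists>y\<in>A. ft x y = 1" and I: "finite ?I" "?I \<noteq> {}"
    using H unfolding thm_hyps_def by auto
  have S: "?S = {Fin [a] | a. a \<in> A \<and> infinite {y \<in> A. ft a y = 1}}"
    by (rule Xf_induced1_length_one[OF succ])
  then have S_image: "?S = (\<lambda>a. Fin [a]) ` ?I" by auto
  show "finite ?S" using S_image I by simp
  show "?S = {Fin [a] | a. a \<in> A \<and> infinite {y \<in> A. ft a y = 1}}" by (rule S)
  fix B :: "'b set" and gt \<phi>
  show "\<not> is_conjugacy A (Xf A (induced1 ft)) B (Xf B (induced0 gt)) \<phi>"
  proof
    assume "is_conjugacy A (Xf A (induced1 ft)) B (Xf B (induced0 gt)) \<phi>"
    then have T: "{y \<in> Xf B (induced0 gt). len y = 1} = \<phi> ` ?S"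
      by (simp add: conjugacy_image_length)
    then have "finite {y \<in> Xf B (induced0 gt). len y = 1}" using S_image I by simp
    moreover have "{y \<in> Xf B (induced0 gt). len y = 1} \<noteq> {}" using T S_image I by simp
    ultimately show False using Xf_induced0_length_one_finite_imp_empty by blast
  qed
next
  fix x0 assume "x0 \<in> A"
  then show "thm_hyps A (example_ft x0)" by (rule example_ft_thm_hyps[OF assms])
qed

end
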